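(* Let $n\ge 1$ and $l$ be integers, and fix a linear ordering of $\{E,D,N\}$. Let $BDel(n,n,l)$ be the set of paths in $Del(n,n,l)$ that go strictly above the line $y=x$ at some point. Then $$\sum_{W\in BDel(n,n,l)} q^{\mathrm{maj}(W)} = q\sum_{W\in Del(n+1,n-1,l)} q^{\mathrm{maj}(W)}\quad\text{if } E<N,$$ and $$\sum_{W\in BDel(n,n,l)} q^{\mathrm{maj}(W)} = \sum_{W\in Del(n+1,n-1,l)} q^{\mathrm{maj}(W)}\quad\text{if } E>N.$$ Equivalently, there is a bijection $\varphi:BDel(n,n,l)\to Del(n+1,n-1,l)$ with $\mathrm{maj}(W)=\mathrm{maj}(\varphi(W))+1$ for all $W$ if $E<N$, and $\mathrm{maj}(W)=\mathrm{maj}(\varphi(W))$ for all $W$ if $E>N$.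
   Context: A Delannoy path from $(0,0)$ to $(m,n)$ is a lattice path using only the steps $E=(1,0)$, $D=(1,1)$, $N=(0,1)$; a path with $l$ steps is identified with the word $W=w_1w_2\cdots w_l$ over the alphabet $\{E,D,N\}$. $Del(m,n,l)$ denotes the set of Delannoy paths from $(0,0)$ to $(m,n)$ with exactly $l$ steps. Given a linear ordering of $\{E,D,N\}$, an index $i$ with $1\le i\le l-1$ is a descent of $W$ if $w_i>w_{i+1}$, and $\mathrm{maj}(W)=\sum_{i \text{ descent}} i$. *)

theory Defs
  imports Main
begin

datatype step = E | D | N

definition xcoord :: "step list \<Rightarrow> nat" where
  "xcoord W = length (filter (\<lambda>s. s = E \<or> s = D) W)"

definition ycoord :: "step list \<Rightarrow> nat" where
  "ycoord W = length (filter (\<lambda>s. s = N \<or> s = D) W)"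

definition Del :: "nat \<Rightarrow> nat \<Rightarrow> nat \<Rightarrow> step list set" where
  "Del m n l = {W. length W = l \<and> xcoord W = m \<and> ycoord W = n}"

(* paths that go strictly above the line y = x at some point;
   it suffices to check lattice points, i.e. prefixes *)
definition BDel :: "nat \<Rightarrow> nat \<Rightarrow> step list set" where
  "BDel n l = {W \<in> Del n n l. \<exists>k \<le> length W. xcoord (take k W) < ycoord (take k W)}"

(* the linear order on {E,D,N} is given by an injective rank function;
   i (1-based, 1 \<le> i \<le> l-1) is a descent iff w_i > w_(i+1) *)
definition maj :: "(step \<Rightarrow> nat) \<Rightarrow> step list \<Rightarrow> nat" where
  "maj r W = (\<Sum>i \<in> {i. 1 \<le> i \<and> i < length W \<and> r (W ! (i - 1)) > r (W ! i)}. i)"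

end

(* Let the height of a path be y - x.  A path in BDel(n,n,l) reaches a positive maximal height;
   cutting it at the N step that first reaches this maximum writes it as U N V, where U ends at its
   own maximal height and V never rises above its starting height.  A path in Del(n+1,n-1,l) ends at
   height -2; cutting it at the E step that last leaves its maximal height writes it as U E V with
   the same two properties.  In both cases the cut is unique, so both sets are in bijection with the
   same set of pairs (U, V).
   The letters next to the cut are never E on the left and never N on the right.  Hence, if E, D, N
   are cyclically ordered as E < D < N < E, exchanging the cut letter N for E changes maj by exactly
   [E < N].  For the other cyclic order one first moves a run of D's adjacent to the cut across it;
   this permutes the pairs (U, V). *)

theory Submission
  imports Defs
begin

definition descents :: "(step \<Rightarrow> nat) \<Rightarrow> step list \<Rightarrow> nat set" where
  "descents r W = {i. 1 \<le> i \<and> i < length W \<and> r (W ! (i - 1)) > r (W ! i)}"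

lemma maj_eq_sum_descents: "maj r W = \<Sum> (descents r W)"
  by (simp add: maj_def descents_def)

lemma finite_descents [simp]: "finite (descents r W)"
  by (rule finite_subset[of _ "{..<length W}"]) (auto simp: descents_def)

lemma descents_Nil [simp]: "descents r [] = {}"
  by (simp add: descents_def)

lemma zero_notin_descents [simp]: "0 \<notin> descents r W"
  by (simp add: descents_def)

lemma maj_Nil [simp]: "maj r [] = 0"
  by (simp add: maj_eq_sum_descents)

lemma descents_Cons:
  "descents r (x # W) = Suc ` descents r W \<union> (if W \<noteq> [] \<and> r (hd W) < r x then {1} else {})"
    (is "?lhs = ?rhs")
proof (rule set_eqI)
  fix i
  show "i \<in> ?lhs \<longleftrightarrow> i \<in> ?rhs"
  proof (cases "i \<le> 1")
    case False
    then obtain j where "i = Suc j" "j \<ge> 1" by (cases i) auto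
    then show ?thesis by (auto simp: descents_def image_iff)
  qed (auto simp: descents_def hd_conv_nth le_Suc_eq)
qed

lemma card_descents_Cons:
  "card (descents r (x # W)) = card (descents r W) + of_bool (W \<noteq> [] \<and> r (hd W) < r x)"
  by (auto simp: descents_Cons card_image image_iff)

lemma maj_Cons:
  "maj r (x # W) = maj r W + card (descents r W) + of_bool (W \<noteq> [] \<and> r (hd W) < r x)"
  by (auto simp: maj_eq_sum_descents descents_Cons sum.reindex image_iff sum_Suc[of "\<lambda>i. i"])

lemma card_descents_append:
  "card (descents r (A @ B)) = card (descents r A) + card (descents r B)
     + of_bool (A \<noteq> [] \<and> B \<noteq> [] \<and> r (hd B) < r (last A))"
  by (induction A) (auto simp: card_descents_Cons)

lemma maj_append:
  "maj r (A @ B) = maj r A + maj r B + length A * card (descents r B)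
     + length A * of_bool (A \<noteq> [] \<and> B \<noteq> [] \<and> r (hd B) < r (last A))"
  by (induction A) (auto simp: maj_Cons card_descents_Cons card_descents_append algebra_simps)

lemma descents_replicate [simp]: "descents r (replicate k s) = {}"
  by (auto simp: descents_def)

definition cyclic_order :: "(step \<Rightarrow> nat) \<Rightarrow> step \<Rightarrow> step \<Rightarrow> step \<Rightarrow> bool" where
  "cyclic_order r a b c \<longleftrightarrow>
     (r a < r b \<and> r b < r c) \<or> (r b < r c \<and> r c < r a) \<or> (r c < r a \<and> r a < r b)"

lemma inj_cyclic_order_cases: "inj r \<Longrightarrow> cyclic_order r E D N \<or> cyclic_order r E N D"
  unfolding cyclic_order_def by (metis inj_eq linorder_neqE_nat step.distinct(2,4,6))

lemma maj_N_to_E: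
  assumes "cyclic_order r E D N" "U = [] \<or> last U \<noteq> E" "v \<noteq> N"
  shows "maj r (U @ N # v # V) = maj r (U @ E # v # V) + of_bool (r E < r N)"
  using assms unfolding cyclic_order_def
  by (cases U rule: rev_cases; cases "last U"; cases v)
    (auto simp: maj_append maj_Cons card_descents_Cons)

lemma maj_DN_to_ED:
  assumes "cyclic_order r E N D" "U = [] \<or> last U \<noteq> E" "v \<noteq> N"
  shows "maj r (U @ D # N # v # V) = maj r (U @ E # D # v # V) + of_bool (r E < r N)"
  using assms unfolding cyclic_order_def
  by (cases U rule: rev_cases; cases "last U"; cases v)
    (auto simp: maj_append maj_Cons card_descents_Cons)

lemma maj_ND_to_DE:
  assumes "cyclic_order r E N D" "U = [] \<or> last U = N"
  shows "maj r (U @ N # replicate k D @ E # R)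
           = maj r (U @ replicate k D @ E # E # R) + of_bool (r E < r N)"
  using assms unfolding cyclic_order_def
  by (cases U rule: rev_cases; cases k)
    (auto simp: maj_append maj_Cons card_descents_Cons card_descents_append hd_append)

lemma xcoord_Nil [simp]: "xcoord [] = 0"
  and xcoord_Cons [simp]: "xcoord (s # W) = of_bool (s \<noteq> N) + xcoord W"
  and xcoord_append [simp]: "xcoord (A @ B) = xcoord A + xcoord B"
  by (cases s; simp add: xcoord_def)+

lemma ycoord_Nil [simp]: "ycoord [] = 0"
  and ycoord_Cons [simp]: "ycoord (s # W) = of_bool (s \<noteq> E) + ycoord W"
  and ycoord_append [simp]: "ycoord (A @ B) = ycoord A + ycoord B"
  by (cases s; simp add: ycoord_def)+

fun rise :: "step \<Rightarrow> int" where
  "rise E = -1" | "rise D = 0" | "rise N = 1"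

definition height :: "step list \<Rightarrow> int" where
  "height W = int (ycoord W) - int (xcoord W)"

lemma height_Nil [simp]: "height [] = 0"
  and height_Cons [simp]: "height (s # W) = rise s + height W"
  and height_append [simp]: "height (A @ B) = height A + height B"
  by (cases s; simp add: height_def)+

lemma height_take_Suc:
  "i < length W \<Longrightarrow> height (take (Suc i) W) = height (take i W) + rise (W ! i)"
  by (simp add: take_Suc_conv_app_nth)

lemma height_Ds: "set T \<subseteq> {D} \<Longrightarrow> height T = 0"
  by (induction T) auto

lemma height_take_Ds: "set T \<subseteq> {D} \<Longrightarrow> height (take j T) = 0"
  using set_take_subset[of j T] by (intro height_Ds) blast

definition ends_at_max :: "step list \<Rightarrow> bool" where
  "ends_at_max U \<longleftrightarrow> (\<forall>k. height (take k U) \<le> height U)"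

definition stays_below :: "step list \<Rightarrow> bool" where
  "stays_below V \<longleftrightarrow> (\<forall>k. height (take k V) \<le> 0)"

lemma ends_at_max_height_nonneg: "ends_at_max U \<Longrightarrow> 0 \<le> height U"
  unfolding ends_at_max_def by (metis height_Nil take0)

lemma ends_at_max_last: "ends_at_max U \<Longrightarrow> U = [] \<or> last U \<noteq> E"
  unfolding ends_at_max_def
  by (cases U rule: rev_cases) (auto dest: spec[of _ "length U - 1"])

lemma stays_below_hd: "stays_below V \<Longrightarrow> V = [] \<or> hd V \<noteq> N"
  unfolding stays_below_def by (cases V) (auto dest: spec[of _ 1])

lemma ends_at_max_append_Ds: "set T \<subseteq> {D} \<Longrightarrow> ends_at_max (U @ T) \<longleftrightarrow> ends_at_max U"
  unfolding ends_at_max_def by (simp add: height_Ds height_take_Ds)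

lemma stays_below_Ds_append:
  assumes "set T \<subseteq> {D}"
  shows "stays_below (T @ V) \<longleftrightarrow> stays_below V"
proof -
  have "height (take k (T @ V)) = height (take (k - length T) V)" for k
    using assms by (simp add: height_take_Ds)
  then show ?thesis
    unfolding stays_below_def by (metis add_diff_cancel_right')
qed

lemma ex_highest_prefix: "\<exists>k \<le> length W. \<forall>j. height (take j W) \<le> height (take k W)"
proof -
  let ?H = "(\<lambda>k. height (take k W)) ` {..length W}"
  have "height (take j W) \<le> Max ?H" for j
  proof -
    have "height (take j W) = height (take (min j (length W)) W)" by (simp add: min_def)
    then have "height (take j W) \<in> ?H" by (rule image_eqI) simp
    then show ?thesis by (intro Max_ge) simp_all
  qed
  moreover have "Max ?H \<in> ?H" by (intro Max_in) auto
  ultimately show ?thesis by fastforce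
qed

lemma split_at_first_max:
  assumes "0 < height (take k0 W)"
  obtains U V where "W = U @ N # V" "ends_at_max U" "stays_below V"
proof -
  obtain m where m_max: "\<And>j. height (take j W) \<le> height (take m W)"
    using ex_highest_prefix by blast
  define M where "M = height (take m W)"
  define k where "k = (LEAST k. height (take k W) = M)"
  have k_max: "height (take k W) = M"
    unfolding k_def by (rule LeastI[of _ m]) (simp add: M_def)
  have before_k: "height (take j W) < M" if "j < k" for j
    using not_less_Least[OF that[unfolded k_def]] m_max[of j] by (simp add: M_def)
  have "k \<noteq> 0"
  proof
    assume "k = 0"
    then show False using k_max m_max[of k0] assms by (simp add: M_def)
  qed
  then obtain i where k: "k = Suc i" by (cases k) auto
  have i: "i < length W"
  proof (rule ccontr)
    assume "\<not> i < length W"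
    then have "take i W = take k W" by (simp add: k)
    then show False using before_k[of i] k_max k by simp
  qed
  have "rise (W ! i) > 0" using height_take_Suc[OF i] before_k[of i] k_max k by simp
  then have "W ! i = N" by (cases "W ! i") auto
  then have W: "W = take i W @ N # drop k W" using id_take_nth_drop[OF i] k by simp
  have "ends_at_max (take i W)"
    unfolding ends_at_max_def
  proof
    fix j
    have "take j (take i W) = take (min j i) W" by (simp add: min.commute)
    moreover have "height (take i W) = M - 1"
      using height_take_Suc[OF i] k_max k \<open>W ! i = N\<close> by simp
    ultimately show "height (take j (take i W)) \<le> height (take i W)"
      using before_k[of "min j i"] k by simp
  qed
  moreover have "stays_below (drop k W)"
    unfolding stays_below_def
  proof
    fix j
    have "take (k + j) W = take k W @ take j (drop k W)" by (simp add: take_add)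
    then show "height (take j (drop k W)) \<le> 0" using m_max[of "k + j"] k_max by (simp add: M_def)
  qed
  ultimately show thesis using W that by blast
qed

lemma split_at_last_max:
  assumes "height W < 0"
  obtains U V where "W = U @ E # V" "ends_at_max U" "stays_below V"
proof -
  obtain m where "m \<le> length W" and m_max: "\<And>j. height (take j W) \<le> height (take m W)"
    using ex_highest_prefix by blast
  define M where "M = height (take m W)"
  define k where "k = (GREATEST k. k \<le> length W \<and> height (take k W) = M)"
  have k: "k \<le> length W" "height (take k W) = M"
    using GreatestI_nat[of "\<lambda>k. k \<le> length W \<and> height (take k W) = M" m "length W"]
      \<open>m \<le> length W\<close> by (simp_all add: k_def M_def)
  have after_k: "height (take j W) < M" if "k < j" "j \<le> length W" for j
    using Greatest_le_nat[of "\<lambda>k. k \<le> length W \<and> height (take k W) = M" j "length W"]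
      m_max[of j] that by (fastforce simp: k_def M_def)
  have i: "k < length W"
    using k m_max[of 0] assms by (cases "k = length W") (auto simp: M_def)
  have "rise (W ! k) < 0" using height_take_Suc[OF i] after_k[of "Suc k"] k i by simp
  then have "W ! k = E" by (cases "W ! k") auto
  then have W: "W = take k W @ E # drop (Suc k) W" using id_take_nth_drop[OF i] by simp
  have "ends_at_max (take k W)"
    unfolding ends_at_max_def
  proof
    fix j
    have "take j (take k W) = take (min j k) W" by (simp add: min.commute)
    then show "height (take j (take k W)) \<le> height (take k W)" using m_max k by (simp add: M_def)
  qed
  moreover have "stays_below (drop (Suc k) W)"
    unfolding stays_below_def
  proof
    fix j
    have "take (min (Suc k + j) (length W)) W = take (Suc k) W @ take j (drop (Suc k) W)"
      unfolding take_add[symmetric] by (simp add: min_def)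
    then have "height (take (min (Suc k + j) (length W)) W)
               = height (take (Suc k) W) + height (take j (drop (Suc k) W))"
      by simp
    moreover have "height (take (Suc k) W) = M - 1"
      using height_take_Suc[OF i] k \<open>W ! k = E\<close> by simp
    ultimately show "height (take j (drop (Suc k) W)) \<le> 0"
      using after_k[of "min (Suc k + j) (length W)"] i by simp
  qed
  ultimately show thesis using W that by blast
qed

lemma append_Cons_eq_longer:
  assumes "U @ x # V = U' @ y # V'" "length U < length U'"
  obtains V0 where "U' = U @ x # V0" "V = V0 @ y # V'"
proof -
  have U: "U = take (length U) U'" and xV: "x # V = drop (length U) U' @ y # V'"
    using assms by (auto simp: append_eq_append_conv_if)
  obtain V0 where "drop (length U) U' = x # V0"
    using xV assms(2) by (cases "drop (length U) U'") auto
  then show thesis using that U xV by (metis append_take_drop_id list.inject append_Cons)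
qed

(* The segment V0 between two cut points would need height \<ge> 0 and \<le> -1 (if x = N),
   or \<ge> 1 and \<le> 0 (if x = E). *)
lemma not_ends_at_max_stays_below:
  assumes "x \<noteq> D"
  shows "\<not> (ends_at_max (U @ x # V0) \<and> stays_below (V0 @ x # V'))"
proof
  assume "ends_at_max (U @ x # V0) \<and> stays_below (V0 @ x # V')"
  then have "height (take (length U + of_bool (x = N)) (U @ x # V0)) \<le> height (U @ x # V0)"
    and "height (take (length V0 + of_bool (x = N)) (V0 @ x # V')) \<le> 0"
    unfolding ends_at_max_def stays_below_def by blast+
  then show False using assms by (cases x) auto
qed

definition join :: "step \<Rightarrow> step list \<times> step list \<Rightarrow> step list" where
  "join x = (\<lambda>(U, V). U @ x # V)"

lemma join_Pair [simp]: "join x (U, V) = U @ x # V"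
  by (simp add: join_def)

lemma inj_on_join:
  assumes "x \<noteq> D"
  shows "inj_on (join x) {(U, V). ends_at_max U \<and> stays_below V}"
proof -
  have not_shorter: "\<not> length U < length U'"
    if eq: "U @ x # V = U' @ x # V'" and "ends_at_max U'" "stays_below V" for U V U' V'
  proof
    assume "length U < length U'"
    with eq obtain V0 where "U' = U @ x # V0" "V = V0 @ x # V'"
      by (rule append_Cons_eq_longer)
    then show False using not_ends_at_max_stays_below[OF assms] that by blast
  qed
  show ?thesis
  proof (rule inj_onI, clarify)
    fix U V U' V'
    assume UV: "ends_at_max U" "stays_below V" "ends_at_max U'" "stays_below V'"
      and "join x (U, V) = join x (U', V')"
    then have eq: "U @ x # V = U' @ x # V'" by simp
    have "length U = length U'"
      using not_shorter[OF eq] not_shorter[OF eq[symmetric]] UV by (meson linorder_neqE_nat)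
    then show "U = U' \<and> V = V'" using eq by simp
  qed
qed

definition splittings :: "nat \<Rightarrow> nat \<Rightarrow> (step list \<times> step list) set" where
  "splittings n l = {(U, V). ends_at_max U \<and> stays_below V \<and> U @ N # V \<in> Del n n l}"

lemma bij_betw_splittings_BDel: "bij_betw (join N) (splittings n l) (BDel n l)"
  unfolding bij_betw_def
proof
  show "inj_on (join N) (splittings n l)"
    by (rule inj_on_subset[OF inj_on_join]) (auto simp: splittings_def)
  show "join N ` splittings n l = BDel n l"
  proof (intro equalityI subsetI image_subsetI, unfold split_paired_all)
    fix U V assume UV: "(U, V) \<in> splittings n l"
    then have "0 < height (take (Suc (length U)) (U @ N # V))"
      using ends_at_max_height_nonneg[of U] by (simp add: splittings_def)
    with UV show "join N (U, V) \<in> BDel n l"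
      by (auto simp: BDel_def Del_def splittings_def height_def intro!: exI[of _ "Suc (length U)"])
  next
    fix W assume W: "W \<in> BDel n l"
    then obtain k where "xcoord (take k W) < ycoord (take k W)" by (auto simp: BDel_def)
    then have "0 < height (take k W)" by (simp add: height_def)
    then obtain U V where UV: "W = U @ N # V" "ends_at_max U" "stays_below V"
      by (rule split_at_first_max)
    with W have "(U, V) \<in> splittings n l" by (auto simp: BDel_def Del_def splittings_def)
    then show "W \<in> join N ` splittings n l" by (rule rev_image_eqI) (simp add: UV)
  qed
qed

lemma bij_betw_splittings_Del:
  assumes "n \<ge> 1"
  shows "bij_betw (join E) (splittings n l) (Del (n + 1) (n - 1) l)"
  unfolding bij_betw_def
proof
  show "inj_on (join E) (splittings n l)"
    by (rule inj_on_subset[OF inj_on_join]) (auto simp: splittings_def)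
  show "join E ` splittings n l = Del (n + 1) (n - 1) l"
  proof (intro equalityI subsetI image_subsetI, unfold split_paired_all)
    fix U V assume "(U, V) \<in> splittings n l"
    then show "join E (U, V) \<in> Del (n + 1) (n - 1) l" by (auto simp: Del_def splittings_def)
  next
    fix W assume W: "W \<in> Del (n + 1) (n - 1) l"
    then have "height W < 0" using assms by (simp add: Del_def height_def)
    then obtain U V where UV: "W = U @ E # V" "ends_at_max U" "stays_below V"
      by (rule split_at_last_max)
    with W assms have "(U, V) \<in> splittings n l" by (auto simp: Del_def splittings_def)
    then show "W \<in> join E ` splittings n l" by (rule rev_image_eqI) (simp add: UV)
  qed
qed

lemma splittings_height_snd: "(U, V) \<in> splittings n l \<Longrightarrow> height V < 0"
  using ends_at_max_height_nonneg[of U] by (auto simp: splittings_def Del_def height_def)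

lemma splitting_snd_Cons:
  assumes "(U, V) \<in> splittings n l"
  obtains v V' where "V = v # V'" "v \<noteq> N"
proof -
  have "V \<noteq> []" using splittings_height_snd[OF assms] by auto
  then obtain v V' where V: "V = v # V'" by (cases V) auto
  have "stays_below V" using assms by (simp add: splittings_def)
  then have "v \<noteq> N" using stays_below_hd V by fastforce
  with V show thesis by (rule that)
qed

lemma finite_step_lists_length_le: "finite {xs :: step list. length xs \<le> l}"
proof -
  have "finite (UNIV :: step set)"
  proof (rule finite_subset)
    show "UNIV \<subseteq> {E, D, N}" using step.exhaust by blast
  qed simp
  then show ?thesis using finite_lists_length_le[of UNIV l] by simp
qed

lemma finite_splittings: "finite (splittings n l)"
  by (rule finite_subset[of _ "{xs. length xs \<le> l} \<times> {xs. length xs \<le> l}"])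
    (auto simp: splittings_def Del_def finite_step_lists_length_le)

(* Let a and b be the lengths of the maximal runs of D's at the end of U and at the start of V.
   Then shift_D maps (a, b) to (a - 1, b + 1) if a > 0 and (0, b) to (b, 0), a cyclic
   permutation of the ways to distribute a + b D's around the cut. *)
definition shift_D :: "step list \<times> step list \<Rightarrow> step list \<times> step list" where
  "shift_D = (\<lambda>(U, V). if U \<noteq> [] \<and> last U = D then (butlast U, D # V)
                       else (U @ takeWhile (\<lambda>s. s = D) V, dropWhile (\<lambda>s. s = D) V))"

lemma shift_D_snoc_D: "shift_D (U @ [D], V) = (U, D # V)"
  by (simp add: shift_D_def)

lemma shift_D_not_snoc_D:
  "U = [] \<or> last U \<noteq> D \<Longrightarrow>
     shift_D (U, V) = (U @ takeWhile (\<lambda>s. s = D) V, dropWhile (\<lambda>s. s = D) V)"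
  by (auto simp: shift_D_def)

lemma snoc_D_cases:
  obtains (snoc_D) U1 where "U = U1 @ [D]" | (not_snoc_D) "U = [] \<or> last U \<noteq> D"
  by (cases U rule: rev_cases) auto

lemma shift_D_in_splittings:
  assumes "(U, V) \<in> splittings n l"
  shows "shift_D (U, V) \<in> splittings n l"
proof (cases U rule: snoc_D_cases)
  case (snoc_D U1)
  then show ?thesis
    using assms ends_at_max_append_Ds[of "[D]" U1] stays_below_Ds_append[of "[D]" V]
    by (auto simp: shift_D_snoc_D splittings_def Del_def)
next
  case not_snoc_D
  define T where "T = takeWhile (\<lambda>s. s = D) V"
  define R where "R = dropWhile (\<lambda>s. s = D) V"
  have T: "set T \<subseteq> {D}" by (auto simp: T_def dest: set_takeWhileD)
  have "V = T @ R" by (simp add: T_def R_def)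
  moreover have "shift_D (U, V) = (U @ T, R)"
    using not_snoc_D by (simp add: shift_D_not_snoc_D T_def R_def)
  ultimately show ?thesis
    using assms ends_at_max_append_Ds[OF T, of U] stays_below_Ds_append[OF T, of R]
    by (auto simp: splittings_def Del_def)
qed

lemma append_Ds_cancel:
  assumes "U = [] \<or> last U \<noteq> D" "U' = [] \<or> last U' \<noteq> D" "set T \<subseteq> {D}" "set T' \<subseteq> {D}"
    and "U @ T = U' @ T'"
  shows "U = U'"
proof -
  have strip: "rev (dropWhile (\<lambda>s. s = D) (rev (U @ T))) = U"
    if "U = [] \<or> last U \<noteq> D" "set T \<subseteq> {D}" for U T
    using that by (cases U rule: rev_cases) (auto simp: dropWhile_append)
  show ?thesis using strip[of U T] strip[of U' T'] assms by metis
qed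

lemma shift_D_not_snoc_D_neq:
  assumes "U = [] \<or> last U \<noteq> D"
  shows "shift_D (U, V) \<noteq> (X, D # Y)"
proof
  assume "shift_D (U, V) = (X, D # Y)"
  then have "dropWhile (\<lambda>s. s = D) V = D # Y" using assms by (simp add: shift_D_not_snoc_D)
  then show False using hd_dropWhile[of "\<lambda>s. s = D" V] by simp
qed

lemma inj_shift_D: "inj shift_D"
proof (rule injI, clarify)
  fix U V U' V' assume eq: "shift_D (U, V) = shift_D (U', V')"
  show "U = U' \<and> V = V'"
  proof (cases U rule: snoc_D_cases; cases U' rule: snoc_D_cases)
    fix U1 U1' assume "U = U1 @ [D]" "U' = U1' @ [D]"
    then show ?thesis using eq by (simp add: shift_D_snoc_D)
  next
    assume not_D: "U = [] \<or> last U \<noteq> D" "U' = [] \<or> last U' \<noteq> D"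
    let ?T = "takeWhile (\<lambda>s. s = D) V" and ?T' = "takeWhile (\<lambda>s. s = D) V'"
    have UT: "U @ ?T = U' @ ?T'" and R: "dropWhile (\<lambda>s. s = D) V = dropWhile (\<lambda>s. s = D) V'"
      using eq not_D by (simp_all add: shift_D_not_snoc_D)
    have "U = U'"
      using not_D UT by (intro append_Ds_cancel[of U U' ?T ?T']) (auto dest: set_takeWhileD)
    moreover from this UT have "?T = ?T'" by simp
    ultimately show ?thesis using R takeWhile_dropWhile_id[of "\<lambda>s. s = D"] by metis
  next
    fix U1 assume "U = U1 @ [D]" "U' = [] \<or> last U' \<noteq> D"
    then show ?thesis using eq shift_D_not_snoc_D_neq[of U' V' U1 V] by (simp add: shift_D_snoc_D)
  next
    fix U1' assume "U = [] \<or> last U \<noteq> D" "U' = U1' @ [D]"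
    then show ?thesis using eq shift_D_not_snoc_D_neq[of U V U1' V'] by (simp add: shift_D_snoc_D)
  qed
qed

lemma bij_betw_shift_D: "bij_betw shift_D (splittings n l) (splittings n l)"
proof -
  have "shift_D ` splittings n l \<subseteq> splittings n l"
    using shift_D_in_splittings by auto
  moreover have "inj_on shift_D (splittings n l)"
    using inj_shift_D by (rule inj_on_subset) simp
  ultimately show ?thesis
    unfolding bij_betw_def using endo_inj_surj[OF finite_splittings] by simp
qed

lemma maj_join_N_eq_maj_join_E:
  assumes "cyclic_order r E D N" "p \<in> splittings n l"
  shows "maj r (join N p) = maj r (join E p) + of_bool (r E < r N)"
proof -
  obtain U V where p: "p = (U, V)" by fastforce
  obtain v V' where "V = v # V'" "v \<noteq> N" using assms(2) p by (auto elim: splitting_snd_Cons)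
  moreover have "U = [] \<or> last U \<noteq> E"
    using assms(2) p ends_at_max_last by (simp add: splittings_def)
  ultimately show ?thesis using maj_N_to_E[OF assms(1)] p by simp
qed

lemma maj_join_N_eq_maj_join_E_shift_D:
  assumes "cyclic_order r E N D" "p \<in> splittings n l"
  shows "maj r (join N p) = maj r (join E (shift_D p)) + of_bool (r E < r N)"
proof -
  obtain U V where p: "p = (U, V)" by fastforce
  have U: "ends_at_max U" using assms(2) p by (simp add: splittings_def)
  show ?thesis
  proof (cases U rule: snoc_D_cases)
    case (snoc_D U1)
    obtain v V' where "V = v # V'" "v \<noteq> N" using assms(2) p by (auto elim: splitting_snd_Cons)
    moreover have "U1 = [] \<or> last U1 \<noteq> E"
      using U ends_at_max_append_Ds[of "[D]" U1] ends_at_max_last snoc_D by simp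
    ultimately show ?thesis using maj_DN_to_ED[OF assms(1)] p snoc_D by (simp add: shift_D_snoc_D)
  next
    case not_snoc_D
    define k where "k = length (takeWhile (\<lambda>s. s = D) V)"
    define R where "R = dropWhile (\<lambda>s. s = D) V"
    have "takeWhile (\<lambda>s. s = D) V = replicate k D"
      unfolding k_def by (rule replicate_length_same[symmetric]) (auto dest: set_takeWhileD)
    then have V: "V = replicate k D @ R" and shift: "shift_D p = (U @ replicate k D, R)"
      using not_snoc_D takeWhile_dropWhile_id[of "\<lambda>s. s = D" V]
      by (simp_all add: p R_def shift_D_not_snoc_D)
    have "(U @ replicate k D, R) \<in> splittings n l"
      using shift_D_in_splittings assms(2) by (simp add: p flip: shift)
    then obtain v R' where R: "R = v # R'" "v \<noteq> N"
      by (rule splitting_snd_Cons)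
    moreover have "v \<noteq> D" using hd_dropWhile[of "\<lambda>s. s = D" V] R(1) unfolding R_def
      by (metis list.distinct(1) list.sel(1))
    moreover have "U = [] \<or> last U = N"
      using not_snoc_D ends_at_max_last[OF U] by (cases "last U") auto
    ultimately show ?thesis using maj_ND_to_DE[OF assms(1)] p V shift by (cases v) simp_all
  qed
qed

lemma ex_splittings_bij_maj:
  assumes "inj r"
  obtains \<sigma> where "bij_betw \<sigma> (splittings n l) (splittings n l)"
    "\<And>p. p \<in> splittings n l \<Longrightarrow> maj r (join N p) = maj r (join E (\<sigma> p)) + of_bool (r E < r N)"
  using inj_cyclic_order_cases[OF assms]
proof
  assume "cyclic_order r E D N"
  then show thesis using that[of id] maj_join_N_eq_maj_join_E by simp
next
  assume "cyclic_order r E N D"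
  then show thesis using that[OF bij_betw_shift_D] maj_join_N_eq_maj_join_E_shift_D by blast
qed

lemma ex_bij_BDel_Del_maj:
  assumes "inj r" "n \<ge> 1"
  obtains \<phi> where "bij_betw \<phi> (BDel n l) (Del (n + 1) (n - 1) l)"
    "\<And>W. W \<in> BDel n l \<Longrightarrow> maj r W = maj r (\<phi> W) + of_bool (r E < r N)"
proof -
  obtain \<sigma> where \<sigma>: "bij_betw \<sigma> (splittings n l) (splittings n l)"
    and maj_\<sigma>: "\<And>p. p \<in> splittings n l \<Longrightarrow>
                  maj r (join N p) = maj r (join E (\<sigma> p)) + of_bool (r E < r N)"
    using ex_splittings_bij_maj[OF assms(1)] by blast
  define \<psi> where "\<psi> = inv_into (splittings n l) (join N)"
  have \<psi>: "bij_betw \<psi> (BDel n l) (splittings n l)"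
    unfolding \<psi>_def by (rule bij_betw_inv_into[OF bij_betw_splittings_BDel])
  have "bij_betw (join E \<circ> \<sigma> \<circ> \<psi>) (BDel n l) (Del (n + 1) (n - 1) l)"
    using bij_betw_trans[OF \<psi> bij_betw_trans[OF \<sigma> bij_betw_splittings_Del[OF assms(2)]]]
    by (simp add: comp_assoc)
  moreover have "maj r W = maj r ((join E \<circ> \<sigma> \<circ> \<psi>) W) + of_bool (r E < r N)"
    if "W \<in> BDel n l" for W
  proof -
    have "join N (\<psi> W) = W"
      unfolding \<psi>_def using bij_betw_inv_into_right[OF bij_betw_splittings_BDel that] .
    then show ?thesis using maj_\<sigma>[of "\<psi> W"] bij_betwE[OF \<psi>] that by auto
  qed
  ultimately show thesis by (rule that)
qed

theorem lemma2p1: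
  fixes r :: "step \<Rightarrow> nat" and n l :: nat and q :: "'a :: comm_ring_1"
  assumes "inj r" and "n \<ge> 1"
  shows "(r E < r N \<longrightarrow>
            (\<Sum>W\<in>BDel n l. q ^ maj r W) = q * (\<Sum>W\<in>Del (n+1) (n-1) l. q ^ maj r W))
       \<and> (r N < r E \<longrightarrow>
            (\<Sum>W\<in>BDel n l. q ^ maj r W) = (\<Sum>W\<in>Del (n+1) (n-1) l. q ^ maj r W))"
proof -
  obtain \<phi> where \<phi>: "bij_betw \<phi> (BDel n l) (Del (n + 1) (n - 1) l)"
    and maj_\<phi>: "\<And>W. W \<in> BDel n l \<Longrightarrow> maj r W = maj r (\<phi> W) + of_bool (r E < r N)"
    using ex_bij_BDel_Del_maj[OF assms] by blast
  have "(\<Sum>W\<in>BDel n l. q ^ maj r W)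
        = (\<Sum>W\<in>BDel n l. q ^ of_bool (r E < r N) * q ^ maj r (\<phi> W))"
    by (intro sum.cong) (simp_all add: maj_\<phi> power_add mult.commute)
  also have "\<dots> = q ^ of_bool (r E < r N) * (\<Sum>W\<in>BDel n l. q ^ maj r (\<phi> W))"
    by (simp add: sum_distrib_left)
  also have "(\<Sum>W\<in>BDel n l. q ^ maj r (\<phi> W)) = (\<Sum>W\<in>Del (n + 1) (n - 1) l. q ^ maj r W)"
    using sum.reindex_bij_betw[OF \<phi>] .
  finally show ?thesis by auto
qed

end
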